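(* Let $(S,V)$ be a complete semiring-semimodule pair, let $n\ge1$, let $\Gamma$ be an alphabet, and let $M\in (S^{n\times n})^{\Gamma^*\times\Gamma^*}$ be a pushdown transition matrix. Then for all $p\in\Gamma$, $$(M^\omega)_p=\sum_{p'\in\Gamma}(A_M)_{p,p'}\,(M^\omega)_{p'}.$$
   Context: A complete semiring-semimodule pair $(S,V)$ (in the sense of Ésik and Kuich, "Modern Automata Theory") consists of a complete starsemiring $S$ (arbitrary sums with infinite associativity/commutativity/distributivity laws, star $s^*=\sum_{j\ge0}s^j$) and a complete $S$-semimodule $V$, with infinite products $\prod_{j\ge1}s_j\in V$ of sequences in $S$ satisfying the axioms of that framework. $M\in (S^{n\times n})^{\Gamma^*\times\Gamma^*}$ (a $\Gamma^*\times\Gamma^*$ matrix with $n\times n$ blocks over $S$) is a pushdown transition matrix if (i) for each $p\in\Gamma$ only finitely many blocks $M_{p,\pi}$ are nonzero, and (ii) $M_{\pi_1,\pi_2}=M_{p,\pi}$ if $\pi_1=p\pi'$, $\pi_2=\pi\pi'$ for some $p\in\Gamma$, $\pi,\pi'\in\Gamma^*$, and $0$ otherwise. $M^*=\sum_{m\ge0}M^m$ with blocks $(M^* )_{\pi,\pi'}$. $M^\omega\in (V^n)^{\Gamma^*}$ is given by $((M^\omega)_\pi)_i=\sum_{\pi_1,\pi_2,\ldots\in\Gamma^*}\sum_{j_1,j_2,\ldots\in\{1,\dots,n\}}(M_{\pi,\pi_1})_{i,j_1}(M_{\pi_1,\pi_2})_{j_1,j_2}\cdots$. For $p,p'\in\Gamma$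 the matrix $(A_M)_{p,p'}\in S^{n\times n}$ is $$(A_M)_{p,p'}=\sum_{\substack{\pi=p_1\dots p_k\in\Gamma^+,\ 1\le j\le k\\ p_j=p'}}M_{p,\pi}\,(M^* )_{p_1,\epsilon}\cdots(M^* )_{p_{j-1},\epsilon}.$$ *)

theory Defs
  imports Main "HOL-Library.Countable"
begin

(* Universe of indices for complete sums: U = nat => nat (cardinality of the continuum).
   Every index set used in the statement is encoded injectively into U. *)
type_synonym idx = "nat \<Rightarrow> nat"

definition seq_encode :: "(nat \<Rightarrow> idx) \<Rightarrow> idx" where
  "seq_encode \<sigma> = (\<lambda>k. case prod_decode k of (a, b) \<Rightarrow> \<sigma> a b)"

definition seq_decode :: "idx \<Rightarrow> nat \<Rightarrow> idx" where
  "seq_decode u = (\<lambda>a b. u (prod_encode (a, b)))"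

(* Complete semiring-semimodule pair (Esik-Kuich), with sums over families indexed by
   subsets of the index universe idx.
   ssum f I = sum_{i in I} f i in S,  vsum f I = sum_{i in I} f i in V,
   smult = scalar action S x V -> V,  iprod s = prod_{j>=1} s_j (s_j = s (j-1)). *)
locale cssp =
  fixes ssum :: "(idx \<Rightarrow> 's::semiring_1) \<Rightarrow> idx set \<Rightarrow> 's"
    and vsum :: "(idx \<Rightarrow> 'v::comm_monoid_add) \<Rightarrow> idx set \<Rightarrow> 'v"
    and smult :: "'s \<Rightarrow> 'v \<Rightarrow> 'v"
    and iprod :: "(nat \<Rightarrow> 's) \<Rightarrow> 'v"
  assumes ssum_cong: "(\<And>i. i \<in> I \<Longrightarrow> f i = f' i) \<Longrightarrow> ssum f I = ssum f' I"
    and ssum_empty: "ssum f {} = 0"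
    and ssum_single: "ssum f {i} = f i"
    and ssum_pair: "i \<noteq> k \<Longrightarrow> ssum f {i, k} = f i + f k"
    and ssum_partition:
      "(\<And>j j'. j \<in> J \<Longrightarrow> j' \<in> J \<Longrightarrow> j \<noteq> j' \<Longrightarrow> P j \<inter> P j' = {})
       \<Longrightarrow> ssum f (\<Union>j\<in>J. P j) = ssum (\<lambda>j. ssum f (P j)) J"
    and ssum_distl: "ssum (\<lambda>i. a * f i) I = a * ssum f I"
    and ssum_distr: "ssum (\<lambda>i. f i * a) I = ssum f I * a"
    and vsum_cong: "(\<And>i. i \<in> I \<Longrightarrow> g i = h i) \<Longrightarrow> vsum g I = vsum h I"
    and vsum_empty: "vsum g {} = 0"
    and vsum_single: "vsum g {i} = g i"
    and vsum_pair: "i \<noteq> k \<Longrightarrow> vsum g {i, k} = g i + g k"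
    and vsum_partition:
      "(\<And>j j'. j \<in> J \<Longrightarrow> j' \<in> J \<Longrightarrow> j \<noteq> j' \<Longrightarrow> P j \<inter> P j' = {})
       \<Longrightarrow> vsum g (\<Union>j\<in>J. P j) = vsum (\<lambda>j. vsum g (P j)) J"
    and smult_add_left: "smult (a + b) v = smult a v + smult b v"
    and smult_add_right: "smult a (v + w) = smult a v + smult a w"
    and smult_mult: "smult (a * b) v = smult a (smult b v)"
    and smult_one: "smult 1 v = v"
    and smult_zero_left: "smult 0 v = 0"
    and smult_zero_right: "smult a 0 = 0"
    and vsum_smult_left: "vsum (\<lambda>i. smult (f i) v) I = smult (ssum f I) v"
    and vsum_smult_right: "vsum (\<lambda>i. smult a (g i)) I = smult a (vsum g I)"
    and iprod_first: "iprod s = smult (s 0) (iprod (\<lambda>j. s (Suc j)))"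
    and iprod_group: "strict_mono n \<Longrightarrow> n 0 = 0 \<Longrightarrow>
       iprod s = iprod (\<lambda>j. prod_list (map s [n j..<n (Suc j)]))"
    and iprod_distrib:
      "iprod (\<lambda>j. ssum (F j) (Is j)) =
       vsum (\<lambda>u. iprod (\<lambda>j. F j (seq_decode u j))) (seq_encode ` {\<sigma>. \<forall>j. \<sigma> j \<in> Is j})"

definition csum :: "((idx \<Rightarrow> 's) \<Rightarrow> idx set \<Rightarrow> 's) \<Rightarrow> ('j::countable \<Rightarrow> 's) \<Rightarrow> 'j set \<Rightarrow> 's" where
  "csum ssum f J = ssum (\<lambda>u. f (from_nat (u 0))) ((\<lambda>x (_::nat). to_nat x) ` J)"

definition vsum_seq :: "((idx \<Rightarrow> 'v) \<Rightarrow> idx set \<Rightarrow> 'v) \<Rightarrow> ((nat \<Rightarrow> 'j::countable) \<Rightarrow> 'v)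
    \<Rightarrow> (nat \<Rightarrow> 'j) set \<Rightarrow> 'v" where
  "vsum_seq vsum f X = vsum (\<lambda>u. f (from_nat \<circ> u)) ((\<lambda>x. to_nat \<circ> x) ` X)"

(* blocks: n x n matrices over S, with n = CARD('n) *)
type_synonym ('n, 's) block = "'n \<Rightarrow> 'n \<Rightarrow> 's"

definition zero_block :: "('n, 's::zero) block" where
  "zero_block = (\<lambda>_ _. 0)"

definition one_block :: "('n, 's::{zero,one}) block" where
  "one_block = (\<lambda>i j. if i = j then 1 else 0)"

definition block_mult :: "('n::finite, 's::semiring_1) block \<Rightarrow> ('n, 's) block \<Rightarrow> ('n, 's) block" where
  "block_mult A B = (\<lambda>i j. \<Sum>k\<in>UNIV. A i k * B k j)"

fun block_prod :: "('n::finite, 's::semiring_1) block list \<Rightarrow> ('n, 's) block" where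
  "block_prod [] = one_block"
| "block_prod (A # As) = block_mult A (block_prod As)"

(* pushdown transition matrix M : Gamma* x Gamma* -> S^{n x n};  M [p] pi is M_{p,pi} *)
definition pushdown_transition_matrix :: "('a list \<Rightarrow> 'a list \<Rightarrow> ('n, 's::zero) block) \<Rightarrow> bool" where
  "pushdown_transition_matrix M \<longleftrightarrow>
     (\<forall>p. finite {\<pi>. M [p] \<pi> \<noteq> zero_block}) \<and>
     (\<forall>p \<pi> \<pi>'. M (p # \<pi>') (\<pi> @ \<pi>') = M [p] \<pi>) \<and>
     (\<forall>\<pi>1 \<pi>2. \<not> (\<exists>p \<pi> \<pi>'. \<pi>1 = p # \<pi>' \<and> \<pi>2 = \<pi> @ \<pi>') \<longrightarrow> M \<pi>1 \<pi>2 = zero_block)"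

fun mpow :: "((idx \<Rightarrow> 's) \<Rightarrow> idx set \<Rightarrow> 's) \<Rightarrow> nat \<Rightarrow> ('a::countable list \<Rightarrow> 'a list \<Rightarrow> ('n::countable, 's::semiring_1) block)
    \<Rightarrow> 'a list \<Rightarrow> 'a list \<Rightarrow> ('n, 's) block" where
  "mpow ssum 0 M \<pi> \<pi>' = (if \<pi> = \<pi>' then one_block else zero_block)"
| "mpow ssum (Suc m) M \<pi> \<pi>' =
     (\<lambda>i j. csum ssum (\<lambda>(\<rho>, k). M \<pi> \<rho> i k * mpow ssum m M \<rho> \<pi>' k j) UNIV)"

definition mstar :: "((idx \<Rightarrow> 's) \<Rightarrow> idx set \<Rightarrow> 's) \<Rightarrow> ('a::countable list \<Rightarrow> 'a list \<Rightarrow> ('n::countable, 's::semiring_1) block)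
    \<Rightarrow> 'a list \<Rightarrow> 'a list \<Rightarrow> ('n, 's) block" where
  "mstar ssum M \<pi> \<pi>' = (\<lambda>i j. csum ssum (\<lambda>m. mpow ssum m M \<pi> \<pi>' i j) UNIV)"

(* (A_M)_{p,p'} = sum over pi = p_1..p_k in Gamma^+ and 1 <= j <= k with p_j = p' of
   M_{p,pi} (M^* )_{p_1,eps} ... (M^* )_{p_{j-1},eps}.
   Here j is 0-based: pi ! j = p' and the prefix p_1..p_{j-1} is take j pi. *)
definition A_M :: "((idx \<Rightarrow> 's) \<Rightarrow> idx set \<Rightarrow> 's) \<Rightarrow> ('a::countable list \<Rightarrow> 'a list \<Rightarrow> ('n::finite, 's::semiring_1) block)
    \<Rightarrow> 'a \<Rightarrow> 'a \<Rightarrow> ('n, 's) block" where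
  "A_M ssum M p p' = (\<lambda>i i'. csum ssum
     (\<lambda>(\<pi>, j). block_prod (M [p] \<pi> # map (\<lambda>q. mstar ssum M [q] []) (take j \<pi>)) i i')
     {(\<pi>, j). \<pi> \<noteq> [] \<and> j < length \<pi> \<and> \<pi> ! j = p'})"

(* ((M^omega)_pi)_i = sum over all sequences (pi_1,j_1),(pi_2,j_2),... of
   (M_{pi,pi_1})_{i,j_1} (M_{pi_1,pi_2})_{j_1,j_2} ...   (x k = (pi_{k+1}, j_{k+1})) *)
definition Momega :: "((idx \<Rightarrow> 'v) \<Rightarrow> idx set \<Rightarrow> 'v) \<Rightarrow> ((nat \<Rightarrow> 's) \<Rightarrow> 'v)
    \<Rightarrow> ('a::countable list \<Rightarrow> 'a list \<Rightarrow> ('n::countable, 's) block) \<Rightarrow> 'a list \<Rightarrow> 'n \<Rightarrow> 'v" where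
  "Momega vsum iprod M \<pi> i = vsum_seq vsum
     (\<lambda>x. iprod (\<lambda>k. case (if k = 0 then (\<pi>, i) else x (k - 1)) of (\<rho>, a) \<Rightarrow>
                       (case x k of (\<sigma>, b) \<Rightarrow> M \<rho> \<sigma> a b)))
     UNIV"

end

(* (M^omega)_pi is the total weight of the infinite runs starting with stack pi. Splitting off
   the first step gives (M^omega)_p = sum_pi M_{p,pi} (M^omega)_pi. A run from p sigma either
   stays strictly above sigma forever, and is then a run from p with sigma appended at the
   bottom, or it reaches stack sigma for the first time after t+1 steps, in state k, which
   contributes (M^(t+1))_{p,eps} (M^omega)_sigma; since a pushdown matrix never jumps below
   the bottom part of a stack, all other runs have weight 0. Hence
   (M^omega)_{p sigma} = (M^omega)_p + (M^* )_{p,eps} (M^omega)_sigma, and unfolding this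
   along pi = p_1 ... p_k gives
   (M^omega)_pi = sum_j (M^* )_{p_1,eps} ... (M^* )_{p_(j-1),eps} (M^omega)_{p_j},
   which turns the first-step equation into the claim. *)

theory Submission
  imports Defs "HOL-Library.Sublist"
begin

text \<open>Complete sums may be indexed by any type that embeds injectively into \<open>idx\<close>, such as
  infinite sequences over a countable type.\<close>

class idx_embeddable = assumes ex_inj_idx: "\<exists>e::'a \<Rightarrow> idx. inj e"

context countable
begin

subclass idx_embeddable
proof
  obtain f :: "'a \<Rightarrow> nat" where "inj f" using ex_inj by blast
  then have "inj (\<lambda>x::'a. \<lambda>_::nat. f x)"
    by (auto intro!: injI dest: fun_cong injD)
  then show "\<exists>e::'a \<Rightarrow> idx. inj e" by blast
qed

end

lemma seq_decode_encode [simp]: "seq_decode (seq_encode \<sigma>) = \<sigma>"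
  by (auto simp: seq_decode_def seq_encode_def fun_eq_iff)

lemma seq_encode_eq_iff: "seq_encode \<sigma> = seq_encode \<tau> \<longleftrightarrow> \<sigma> = \<tau>"
  by (metis seq_decode_encode)

definition idx_enc :: "'a::idx_embeddable \<Rightarrow> idx" where
  "idx_enc = (SOME e. inj e)"

lemma inj_idx_enc: "inj idx_enc"
  unfolding idx_enc_def by (rule someI_ex[OF ex_inj_idx])

lemma idx_enc_eq_iff [simp]: "idx_enc x = idx_enc y \<longleftrightarrow> x = y"
  using inj_idx_enc by (auto simp: inj_def)

lemma inv_idx_enc [simp]: "inv idx_enc (idx_enc x) = x"
  by (rule inv_f_f[OF inj_idx_enc])

instance "fun" :: (countable, idx_embeddable) idx_embeddable
proof
  have "inj (\<lambda>f::'a \<Rightarrow> 'b. seq_encode (\<lambda>a. idx_enc (f (from_nat a))))"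
  proof (rule injI)
    fix f g :: "'a \<Rightarrow> 'b"
    assume "seq_encode (\<lambda>a. idx_enc (f (from_nat a))) = seq_encode (\<lambda>a. idx_enc (g (from_nat a)))"
    then have "idx_enc (f x) = idx_enc (g x)" for x
      by (metis seq_encode_eq_iff from_nat_to_nat)
    then show "f = g" by auto
  qed
  then show "\<exists>e::('a \<Rightarrow> 'b) \<Rightarrow> idx. inj e" by blast
qed

instance prod :: (idx_embeddable, idx_embeddable) idx_embeddable
proof
  have "inj (\<lambda>(x::'a, y::'b). seq_encode (\<lambda>a. if a = 0 then idx_enc x else idx_enc y))"
  proof (rule injI, clarsimp)
    fix x x' :: 'a and y y' :: 'b
    assume "seq_encode (\<lambda>a. if a = 0 then idx_enc x else idx_enc y)
      = seq_encode (\<lambda>a. if a = 0 then idx_enc x' else idx_enc y')"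
    then have "(\<lambda>a::nat. if a = 0 then idx_enc x else idx_enc y)
      = (\<lambda>a. if a = 0 then idx_enc x' else idx_enc y')" by (simp only: seq_encode_eq_iff)
    from fun_cong[OF this, of 0] fun_cong[OF this, of 1] show "x = x' \<and> y = y'" by simp
  qed
  then show "\<exists>e::('a \<times> 'b) \<Rightarrow> idx. inj e" by blast
qed

locale complete_sum =
  fixes sm :: "(idx \<Rightarrow> 'b::comm_monoid_add) \<Rightarrow> idx set \<Rightarrow> 'b"
  assumes sm_cong: "(\<And>i. i \<in> I \<Longrightarrow> f i = f' i) \<Longrightarrow> sm f I = sm f' I"
    and sm_empty: "sm f {} = 0"
    and sm_single: "sm f {i} = f i"
    and sm_pair: "i \<noteq> k \<Longrightarrow> sm f {i, k} = f i + f k"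
    and sm_partition:
      "(\<And>j j'. j \<in> J \<Longrightarrow> j' \<in> J \<Longrightarrow> j \<noteq> j' \<Longrightarrow> P j \<inter> P j' = {})
       \<Longrightarrow> sm f (\<Union>j\<in>J. P j) = sm (\<lambda>j. sm f (P j)) J"
begin

definition isum :: "('x::idx_embeddable \<Rightarrow> 'b) \<Rightarrow> 'x set \<Rightarrow> 'b" where
  "isum g X = sm (\<lambda>u. g (inv idx_enc u)) (idx_enc ` X)"

lemma isum_encoding:
  assumes "inj_on e X" and "\<And>x. x \<in> X \<Longrightarrow> d (e x) = x"
  shows "sm (\<lambda>u. g (d u)) (e ` X) = isum g X"
proof -
  let ?G = "\<lambda>u. g (inv idx_enc u)"
  have "idx_enc ` X = (\<Union>u\<in>e ` X. {idx_enc (d u)})"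
    using assms(2) by force
  then have "isum g X = sm (\<lambda>u. sm ?G {idx_enc (d u)}) (e ` X)"
    unfolding isum_def by (simp only:) (rule sm_partition, use assms in \<open>auto simp: inj_on_def\<close>)
  also have "\<dots> = sm (\<lambda>u. g (d u)) (e ` X)"
    by (rule sm_cong) (use assms in \<open>auto simp: sm_single\<close>)
  finally show ?thesis by simp
qed

lemma isum_reindex:
  assumes "bij_betw h X Y"
  shows "isum g Y = isum (g \<circ> h) X"
proof -
  have b: "bij_betw (inv_into X h) Y X" using assms by (rule bij_betw_inv_into)
  have "isum g Y = sm (\<lambda>u. g ((h \<circ> inv idx_enc) u)) ((idx_enc \<circ> inv_into X h) ` Y)"
  proof (rule isum_encoding[symmetric])
    show "inj_on (idx_enc \<circ> inv_into X h) Y"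
      using b inj_idx_enc by (auto simp: bij_betw_def inj_on_def)
    fix y assume "y \<in> Y"
    then show "(h \<circ> inv idx_enc) ((idx_enc \<circ> inv_into X h) y) = y"
      using assms by (auto simp: bij_betw_def f_inv_into_f)
  qed
  also have "(idx_enc \<circ> inv_into X h) ` Y = idx_enc ` X"
    by (simp only: image_comp[symmetric]) (use b in \<open>simp add: bij_betw_def\<close>)
  finally show ?thesis by (simp add: isum_def)
qed

lemma isum_cong: "(\<And>x. x \<in> X \<Longrightarrow> f x = g x) \<Longrightarrow> isum f X = isum g X"
  unfolding isum_def by (rule sm_cong) auto

lemma isum_empty [simp]: "isum g {} = 0"
  by (simp add: isum_def sm_empty)

lemma isum_singleton [simp]: "isum g {x} = g x"
  by (simp add: isum_def sm_single)

lemma isum_pair: "x \<noteq> y \<Longrightarrow> isum g {x, y} = g x + g y"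
  by (simp add: isum_def sm_pair)

lemma isum_UN_disjoint:
  assumes "\<And>j j'. j \<in> J \<Longrightarrow> j' \<in> J \<Longrightarrow> j \<noteq> j' \<Longrightarrow> P j \<inter> P j' = {}"
  shows "isum g (\<Union>j\<in>J. P j) = isum (\<lambda>j. isum g (P j)) J"
proof -
  have eq: "idx_enc ` (\<Union>j\<in>J. P j) = (\<Union>v\<in>idx_enc ` J. idx_enc ` P (inv idx_enc v))" by auto
  have "sm (\<lambda>u. g (inv idx_enc u)) (\<Union>v\<in>idx_enc ` J. idx_enc ` P (inv idx_enc v))
     = sm (\<lambda>v. sm (\<lambda>u. g (inv idx_enc u)) (idx_enc ` P (inv idx_enc v))) (idx_enc ` J)"
  proof (rule sm_partition)
    fix j j' assume "j \<in> idx_enc ` J" "j' \<in> idx_enc ` J" "j \<noteq> j'"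
    then obtain a a' where a: "a \<in> J" "a' \<in> J" "a \<noteq> a'" "j = idx_enc a" "j' = idx_enc a'"
      by auto
    then have "P a \<inter> P a' = {}" using assms by blast
    then show "idx_enc ` P (inv idx_enc j) \<inter> idx_enc ` P (inv idx_enc j') = {}"
      using a by (simp add: image_Int[OF inj_idx_enc, symmetric])
  qed
  then show ?thesis by (simp add: isum_def eq)
qed

lemma isum_zero:
  fixes X :: "'x::idx_embeddable set"
  assumes "\<And>x. x \<in> X \<Longrightarrow> g x = 0"
  shows "isum g X = 0"
proof -
  have "isum g X = isum (\<lambda>_. isum (\<lambda>_. 0) ({} :: 'x set)) X"
    by (rule isum_cong) (use assms in simp)
  also have "\<dots> = isum (\<lambda>_. 0) (\<Union>x\<in>X. {} :: 'x set)"
    by (rule isum_UN_disjoint[symmetric]) simp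
  finally show ?thesis by simp
qed

lemma isum_Un_disjoint:
  assumes "A \<inter> B = {}"
  shows "isum g (A \<union> B) = isum g A + isum g B"
proof -
  have "A \<union> B = (\<Union>b\<in>{True, False}. if b then A else B)" by auto
  moreover have "isum g (\<Union>b\<in>{True, False}. if b then A else B)
      = isum (\<lambda>b. isum g (if b then A else B)) {True, False}"
    by (rule isum_UN_disjoint) (use assms in auto)
  ultimately show ?thesis by (simp add: isum_pair)
qed

lemma isum_insert: "x \<notin> X \<Longrightarrow> isum g (insert x X) = g x + isum g X"
  using isum_Un_disjoint[of "{x}" X g] by simp

lemma isum_finite: "finite X \<Longrightarrow> isum g X = sum g X"
  by (induction X rule: finite_induct) (auto simp: isum_insert)

lemma isum_restrict:
  assumes "\<And>x. x \<in> X \<Longrightarrow> x \<notin> F \<Longrightarrow> g x = 0"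
  shows "isum g X = isum g (X \<inter> F)"
proof -
  have "isum g X = isum g (X \<inter> F) + isum g (X - F)"
    using isum_Un_disjoint[of "X \<inter> F" "X - F" g] by (simp add: Int_Diff_Un Int_Diff_disjoint)
  moreover have "isum g (X - F) = 0" by (rule isum_zero) (use assms in auto)
  ultimately show ?thesis by simp
qed

lemma isum_finite_support:
  assumes "finite F" and "\<And>x. x \<in> X \<Longrightarrow> x \<notin> F \<Longrightarrow> g x = 0"
  shows "isum g X = sum g (X \<inter> F)"
proof -
  have "isum g X = isum g (X \<inter> F)" by (rule isum_restrict) (use assms in auto)
  also have "\<dots> = sum g (X \<inter> F)" by (rule isum_finite) (use assms in auto)
  finally show ?thesis .
qed

lemma isum_Sigma: "isum g (SIGMA a:A. B a) = isum (\<lambda>a. isum (\<lambda>b. g (a, b)) (B a)) A"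
proof -
  have "(SIGMA a:A. B a) = (\<Union>a\<in>A. Pair a ` B a)" by auto
  then have "isum g (SIGMA a:A. B a) = isum g (\<Union>a\<in>A. Pair a ` B a)" by simp
  also have "\<dots> = isum (\<lambda>a. isum g (Pair a ` B a)) A"
    by (rule isum_UN_disjoint) auto
  also have "\<dots> = isum (\<lambda>a. isum (\<lambda>b. g (a, b)) (B a)) A"
  proof (rule isum_cong)
    fix a
    show "isum g (Pair a ` B a) = isum (\<lambda>b. g (a, b)) (B a)"
      by (subst isum_reindex[of "Pair a" "B a"]) (auto simp: bij_betw_def inj_on_def comp_def)
  qed
  finally show ?thesis .
qed

lemma isum_fibres:
  assumes "f ` X \<subseteq> J"
  shows "isum g X = isum (\<lambda>j. isum g {x\<in>X. f x = j}) J"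
proof -
  have "X = (\<Union>j\<in>J. {x\<in>X. f x = j})" using assms by auto
  then have "isum g X = isum g (\<Union>j\<in>J. {x\<in>X. f x = j})" by simp
  also have "\<dots> = isum (\<lambda>j. isum g {x\<in>X. f x = j}) J"
    by (rule isum_UN_disjoint) auto
  finally show ?thesis .
qed

lemma csum_eq_isum: "csum sm f J = isum f J"
  unfolding csum_def by (rule isum_encoding) (auto simp: inj_on_def dest: fun_cong)

end

sublocale cssp \<subseteq> S: complete_sum ssum
  by unfold_locales (auto intro: ssum_cong simp: ssum_empty ssum_single ssum_pair ssum_partition)

sublocale cssp \<subseteq> V: complete_sum vsum
  by unfold_locales (auto intro: vsum_cong simp: vsum_empty vsum_single vsum_pair vsum_partition)

context cssp
begin

lemma isum_mult_left: "S.isum (\<lambda>i. a * f i) I = a * S.isum f I"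
  unfolding S.isum_def by (rule ssum_distl)

lemma isum_smult_left: "V.isum (\<lambda>i. smult (f i) v) I = smult (S.isum f I) v"
  unfolding S.isum_def V.isum_def by (rule vsum_smult_left)

lemma isum_smult_right: "V.isum (\<lambda>i. smult a (g i)) I = smult a (V.isum g I)"
  unfolding V.isum_def by (rule vsum_smult_right)

lemma smult_sum_left: "smult (sum f K) v = (\<Sum>k\<in>K. smult (f k) v)"
  by (induction K rule: infinite_finite_induct) (auto simp: smult_zero_left smult_add_left)

lemma smult_sum_right: "smult a (sum g K) = (\<Sum>k\<in>K. smult a (g k))"
  by (induction K rule: infinite_finite_induct) (auto simp: smult_zero_right smult_add_right)

lemma iprod_split_prefix: "iprod s = smult (prod_list (map s [0..<t])) (iprod (\<lambda>j. s (j + t)))"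
proof (induction t arbitrary: s)
  case 0
  then show ?case by (simp add: smult_one)
next
  case (Suc t)
  have "iprod s = smult (s 0) (iprod (\<lambda>j. s (Suc j)))" by (rule iprod_first)
  also have "iprod (\<lambda>j. s (Suc j))
      = smult (prod_list (map (\<lambda>j. s (Suc j)) [0..<t])) (iprod (\<lambda>j. s (Suc (j + t))))"
    by (rule Suc.IH)
  finally show ?case by (simp only: map_upt_Suc smult_mult prod_list.Cons add_Suc_right)
qed

lemma iprod_eq_zero: "s k = 0 \<Longrightarrow> iprod s = 0"
  using iprod_split_prefix[of s "Suc k"] by (simp add: smult_zero_left)

lemma sum_smult_one_block:
  fixes v :: "'n::finite \<Rightarrow> 'v"
  shows "(\<Sum>j\<in>UNIV. smult (one_block i j) (v j)) = v i"
proof -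
  have "(\<Sum>j\<in>UNIV. smult (one_block i j) (v j)) = (\<Sum>j\<in>UNIV. if i = j then v j else 0)"
    by (intro sum.cong refl) (simp add: one_block_def smult_one smult_zero_left)
  then show ?thesis by simp
qed

lemma sum_smult_block_mult:
  "(\<Sum>j\<in>UNIV. smult (block_mult A B i j) (v j))
    = (\<Sum>k\<in>UNIV. smult (A i k) (\<Sum>j\<in>UNIV. smult (B k j) (v j)))"
proof -
  have "(\<Sum>j\<in>UNIV. smult (block_mult A B i j) (v j))
      = (\<Sum>j\<in>UNIV. \<Sum>k\<in>UNIV. smult (A i k) (smult (B k j) (v j)))"
    by (simp add: block_mult_def smult_sum_left smult_mult)
  also have "\<dots> = (\<Sum>k\<in>UNIV. \<Sum>j\<in>UNIV. smult (A i k) (smult (B k j) (v j)))"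
    by (rule sum.swap)
  finally show ?thesis by (simp add: smult_sum_right)
qed

end

definition paths :: "nat \<Rightarrow> 'c \<Rightarrow> 'c \<Rightarrow> 'c list set" where
  "paths m s e = {ys. length ys = m \<and> last (s # ys) = e}"

lemma paths_0: "paths 0 s e = (if s = e then {[]} else {})"
  by (auto simp: paths_def)

lemma paths_Suc: "paths (Suc m) s e = (\<Union>s1. (#) s1 ` paths m s1 e)"
proof (intro equalityI subsetI)
  fix ys assume "ys \<in> paths (Suc m) s e"
  then obtain s1 zs where "ys = s1 # zs" "zs \<in> paths m s1 e"
    by (cases ys) (auto simp: paths_def)
  then show "ys \<in> (\<Union>s1. (#) s1 ` paths m s1 e)" by blast
qed (auto simp: paths_def)

lemma strict_suffix_iff_append: "strict_suffix \<sigma> \<tau> \<longleftrightarrow> (\<exists>\<tau>'. \<tau>' \<noteq> [] \<and> \<tau> = \<tau>' @ \<sigma>)"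
  by (auto simp: strict_suffix_def suffix_def)

locale pushdown = cssp ssum vsum smult iprod
  for ssum :: "(idx \<Rightarrow> 's::semiring_1) \<Rightarrow> idx set \<Rightarrow> 's"
    and vsum :: "(idx \<Rightarrow> 'v::comm_monoid_add) \<Rightarrow> idx set \<Rightarrow> 'v"
    and smult :: "'s \<Rightarrow> 'v \<Rightarrow> 'v"
    and iprod :: "(nat \<Rightarrow> 's) \<Rightarrow> 'v" +
  fixes M :: "'a::countable list \<Rightarrow> 'a list \<Rightarrow> ('n::finite, 's) block"
  assumes pushdown_transition_matrix: "pushdown_transition_matrix M"
begin

lemma M_Cons_append: "M (q # \<tau>) (\<pi> @ \<tau>) = M [q] \<pi>"
  using pushdown_transition_matrix unfolding pushdown_transition_matrix_def by blast

lemma M_Nil: "M [] \<rho> = zero_block"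
  using pushdown_transition_matrix unfolding pushdown_transition_matrix_def by blast

lemma M_nonzero_imp_append: "M (q # \<tau>) \<rho> \<noteq> zero_block \<Longrightarrow> \<exists>\<pi>. \<rho> = \<pi> @ \<tau>"
  using pushdown_transition_matrix unfolding pushdown_transition_matrix_def by blast

lemma finite_M_row_support: "finite {\<pi>. M [p] \<pi> \<noteq> zero_block}"
  using pushdown_transition_matrix unfolding pushdown_transition_matrix_def by blast

lemma M_append_bottom:
  assumes "\<tau> \<noteq> []"
  shows "M (\<tau> @ \<sigma>) (\<tau>' @ \<sigma>) = M \<tau> \<tau>'"
proof -
  obtain q \<tau>1 where \<tau>: "\<tau> = q # \<tau>1" using assms by (cases \<tau>) auto
  show ?thesis
  proof (cases "\<exists>\<pi>. \<tau>' = \<pi> @ \<tau>1")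
    case True
    then show ?thesis using M_Cons_append[of q "\<tau>1 @ \<sigma>"] M_Cons_append[of q \<tau>1] \<tau> by auto
  next
    case False
    then have "M (q # \<tau>1 @ \<sigma>) (\<tau>' @ \<sigma>) = zero_block"
      using M_nonzero_imp_append[of q "\<tau>1 @ \<sigma>" "\<tau>' @ \<sigma>"] by auto
    moreover have "M \<tau> \<tau>' = zero_block" using False M_nonzero_imp_append \<tau> by blast
    ultimately show ?thesis using \<tau> by simp
  qed
qed

text \<open>Configurations are pairs (stack, state). A run from \<open>s\<close> is a sequence \<open>x\<close> of
  configurations, \<open>x 0\<close> being the configuration reached after the first step.\<close>

definition step_weight :: "'a list \<times> 'n \<Rightarrow> 'a list \<times> 'n \<Rightarrow> 's" where
  "step_weight s t = M (fst s) (fst t) (snd s) (snd t)"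

definition run_factor :: "'a list \<times> 'n \<Rightarrow> (nat \<Rightarrow> 'a list \<times> 'n) \<Rightarrow> nat \<Rightarrow> 's" where
  "run_factor s x k = step_weight (case_nat s x k) (x k)"

definition omega_weight :: "'a list \<times> 'n \<Rightarrow> 'v" where
  "omega_weight s = V.isum (\<lambda>x. iprod (run_factor s x)) UNIV"

primrec path_weight :: "'a list \<times> 'n \<Rightarrow> ('a list \<times> 'n) list \<Rightarrow> 's" where
  "path_weight s [] = 1"
| "path_weight s (t # ts) = step_weight s t * path_weight t ts"

lemma step_weight_Nil: "step_weight ([], a) t = 0"
  by (simp add: step_weight_def M_Nil zero_block_def)

lemma run_factor_Suc: "run_factor s x (Suc k) = run_factor (x 0) (\<lambda>j. x (Suc j)) k"
  by (cases k) (simp_all add: run_factor_def)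

lemma Momega_eq_omega_weight: "Momega vsum iprod M \<pi> i = omega_weight (\<pi>, i)"
proof -
  have "(\<lambda>k. case (if k = 0 then (\<pi>, i) else x (k - 1)) of (\<rho>, a) \<Rightarrow>
      (case x k of (\<sigma>, b) \<Rightarrow> M \<rho> \<sigma> a b)) = run_factor (\<pi>, i) x" for x
    by (rule ext) (simp add: run_factor_def step_weight_def split: nat.split prod.splits)
  then show ?thesis
    unfolding Momega_def vsum_seq_def omega_weight_def
    by (simp only:) (rule V.isum_encoding, auto simp: inj_on_def fun_eq_iff)
qed

lemma iprod_run_factor_case_nat:
  "iprod (run_factor s (case_nat t y)) = smult (step_weight s t) (iprod (run_factor t y))"
proof -
  have "(\<lambda>j. run_factor s (case_nat t y) (Suc j)) = run_factor t y"
    by (auto simp: run_factor_Suc fun_eq_iff)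
  then show ?thesis
    using iprod_first[of "run_factor s (case_nat t y)"] by (simp add: run_factor_def)
qed

lemma omega_weight_first_step:
  "omega_weight s = V.isum (\<lambda>t. smult (step_weight s t) (omega_weight t)) UNIV"
proof -
  let ?F = "\<lambda>x. iprod (run_factor s x)"
  have "omega_weight s = V.isum (\<lambda>t. V.isum ?F {x\<in>UNIV. x 0 = t}) UNIV"
    unfolding omega_weight_def by (rule V.isum_fibres) auto
  also have "\<dots> = V.isum (\<lambda>t. smult (step_weight s t) (omega_weight t)) UNIV"
  proof (rule V.isum_cong)
    fix t :: "'a list \<times> 'n"
    have "bij_betw (case_nat t) UNIV {x\<in>UNIV. x 0 = t}"
      by (rule bij_betw_byWitness[where f' = "\<lambda>x j. x (Suc j)"])
        (auto simp: fun_eq_iff split: nat.split)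
    then have "V.isum ?F {x\<in>UNIV. x 0 = t} = V.isum (?F \<circ> case_nat t) UNIV"
      by (rule V.isum_reindex)
    also have "\<dots> = smult (step_weight s t) (omega_weight t)"
      by (simp add: comp_def iprod_run_factor_case_nat isum_smult_right omega_weight_def)
    finally show "V.isum ?F {x\<in>UNIV. x 0 = t} = smult (step_weight s t) (omega_weight t)" .
  qed
  finally show ?thesis .
qed

lemma omega_weight_Nil: "omega_weight ([], i) = 0"
  unfolding omega_weight_def
  by (rule V.isum_zero, rule iprod_eq_zero[of _ 0]) (simp add: run_factor_def step_weight_Nil)

lemma mpow_eq_isum_paths:
  "mpow ssum m M \<pi> \<pi>' i j = S.isum (path_weight (\<pi>, i)) (paths m (\<pi>, i) (\<pi>', j))"
proof (induction m arbitrary: \<pi> i)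
  case 0
  then show ?case by (simp add: paths_0 one_block_def zero_block_def)
next
  case (Suc m)
  let ?P = "\<lambda>s. paths m s (\<pi>', j)"
  have "mpow ssum (Suc m) M \<pi> \<pi>' i j
      = S.isum (\<lambda>(\<rho>, k). M \<pi> \<rho> i k * mpow ssum m M \<rho> \<pi>' k j) UNIV"
    by (simp add: S.csum_eq_isum)
  also have "\<dots> = S.isum (\<lambda>s. S.isum (\<lambda>ys. step_weight (\<pi>, i) s * path_weight s ys) (?P s)) UNIV"
    by (rule S.isum_cong) (auto simp: Suc.IH isum_mult_left step_weight_def)
  also have "\<dots> = S.isum (\<lambda>s. S.isum (path_weight (\<pi>, i)) ((#) s ` ?P s)) UNIV"
  proof (rule S.isum_cong)
    fix s :: "'a list \<times> 'n"
    have "bij_betw ((#) s) (?P s) ((#) s ` ?P s)" by (auto simp: bij_betw_def)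
    then show "S.isum (\<lambda>ys. step_weight (\<pi>, i) s * path_weight s ys) (?P s)
        = S.isum (path_weight (\<pi>, i)) ((#) s ` ?P s)"
      by (subst S.isum_reindex) (auto simp: comp_def)
  qed
  also have "\<dots> = S.isum (path_weight (\<pi>, i)) (\<Union>s. (#) s ` ?P s)"
    by (rule S.isum_UN_disjoint[symmetric]) auto
  finally show ?case by (simp only: paths_Suc)
qed

definition lift :: "'a list \<Rightarrow> 'a list \<times> 'n \<Rightarrow> 'a list \<times> 'n" where
  "lift \<sigma> s = (fst s @ \<sigma>, snd s)"

definition unlift :: "'a list \<Rightarrow> 'a list \<times> 'n \<Rightarrow> 'a list \<times> 'n" where
  "unlift \<sigma> s = (take (length (fst s) - length \<sigma>) (fst s), snd s)"

lemma unlift_lift [simp]: "unlift \<sigma> (lift \<sigma> s) = s"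
  by (simp add: lift_def unlift_def)

lemma lift_unlift: "suffix \<sigma> (fst s) \<Longrightarrow> lift \<sigma> (unlift \<sigma> s) = s"
  by (cases s) (auto simp: lift_def unlift_def suffix_def)

lemma strict_suffix_lift: "fst s \<noteq> [] \<Longrightarrow> strict_suffix \<sigma> (fst (lift \<sigma> s))"
  by (auto simp: strict_suffix_iff_append lift_def)

lemma strict_suffix_imp_unlift_nonempty: "strict_suffix \<sigma> (fst s) \<Longrightarrow> fst (unlift \<sigma> s) \<noteq> []"
  by (auto simp: strict_suffix_iff_append unlift_def)

lemma step_weight_lift: "fst s \<noteq> [] \<Longrightarrow> step_weight (lift \<sigma> s) (lift \<sigma> t) = step_weight s t"
  by (simp add: step_weight_def lift_def M_append_bottom)

lemma path_weight_lift:
  "fst s \<noteq> [] \<Longrightarrow> \<forall>u\<in>set (butlast ys). fst u \<noteq> [] \<Longrightarrow>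
    path_weight (lift \<sigma> s) (map (lift \<sigma>) ys) = path_weight s ys"
proof (induction ys arbitrary: s)
  case (Cons t ts)
  then show ?case by (cases "ts = []") (simp_all add: step_weight_lift)
qed simp

lemma path_weight_eq_zero: "u \<in> set (butlast ys) \<Longrightarrow> fst u = [] \<Longrightarrow> path_weight s ys = 0"
proof (induction ys arbitrary: s)
  case (Cons t ts)
  show ?case
  proof (cases "u = t \<and> ts \<noteq> []")
    case True
    then obtain t' ts' where "ts = t' # ts'" by (cases ts) auto
    with True Cons.prems show ?thesis by (cases t) (simp add: step_weight_Nil)
  next
    case False
    with Cons show ?thesis by (auto split: if_splits)
  qed
qed simp

lemma prod_list_run_factor: "prod_list (map (run_factor s x) [0..<t]) = path_weight s (map x [0..<t])"
proof (induction t arbitrary: s x)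
  case (Suc t)
  show ?case
    by (simp only: map_upt_Suc run_factor_Suc prod_list.Cons path_weight.simps Suc.IH)
      (simp add: run_factor_def)
qed simp

definition stays_above :: "'a list \<Rightarrow> (nat \<Rightarrow> 'a list \<times> 'n) set" where
  "stays_above \<sigma> = {x. \<forall>k. strict_suffix \<sigma> (fst (x k))}"

definition first_return :: "'a list \<Rightarrow> nat \<Rightarrow> 'n \<Rightarrow> (nat \<Rightarrow> 'a list \<times> 'n) set" where
  "first_return \<sigma> t k = {x. x t = (\<sigma>, k) \<and> (\<forall>j<t. strict_suffix \<sigma> (fst (x j)))}"

lemma stays_above_first_return_disjoint: "stays_above \<sigma> \<inter> first_return \<sigma> t k = {}"
  by (auto simp: stays_above_def first_return_def strict_suffix_def dest: spec[of _ t])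

lemma first_return_disjoint:
  assumes "(t, k) \<noteq> (t', k')"
  shows "first_return \<sigma> t k \<inter> first_return \<sigma> t' k' = {}"
proof (rule ccontr)
  assume "first_return \<sigma> t k \<inter> first_return \<sigma> t' k' \<noteq> {}"
  then obtain x where x: "x t = (\<sigma>, k)" "\<forall>j<t. strict_suffix \<sigma> (fst (x j))"
    "x t' = (\<sigma>, k')" "\<forall>j<t'. strict_suffix \<sigma> (fst (x j))"
    by (auto simp: first_return_def)
  then show False
    using assms by (cases t t' rule: linorder_cases) (auto simp: strict_suffix_def)
qed

text \<open>A run from \<open>p\<sigma>\<close> that neither stays above \<open>\<sigma>\<close> nor returns to \<open>\<sigma>\<close> must at some
  point jump below \<open>\<sigma>\<close>, which a pushdown transition matrix forbids.\<close>

lemma iprod_run_factor_eq_zero_if_no_return: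
  assumes "x \<notin> stays_above \<sigma>" and "\<forall>t k. x \<notin> first_return \<sigma> t k"
  shows "iprod (run_factor (p # \<sigma>, i) x) = 0"
proof -
  obtain k where k: "\<not> strict_suffix \<sigma> (fst (x k))" "\<forall>j<k. strict_suffix \<sigma> (fst (x j))"
    using assms(1) exists_least_iff[of "\<lambda>k. \<not> strict_suffix \<sigma> (fst (x k))"]
    by (auto simp: stays_above_def)
  have ne: "fst (x k) \<noteq> \<sigma>"
    using assms(2) k(2) by (cases "x k") (auto simp: first_return_def)
  have "strict_suffix \<sigma> (fst (case_nat (p # \<sigma>, i) x k))"
    using k(2) by (cases k) (auto simp: strict_suffix_iff_append)
  then obtain q \<tau> where st: "fst (case_nat (p # \<sigma>, i) x k) = q # \<tau> @ \<sigma>"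
    by (auto simp: strict_suffix_iff_append neq_Nil_conv)
  have "M (q # \<tau> @ \<sigma>) (fst (x k)) = zero_block"
  proof (rule ccontr)
    assume "M (q # \<tau> @ \<sigma>) (fst (x k)) \<noteq> zero_block"
    then obtain \<pi> where "fst (x k) = \<pi> @ \<tau> @ \<sigma>" using M_nonzero_imp_append by blast
    then have "strict_suffix \<sigma> (fst (x k))"
      using ne by (auto simp: strict_suffix_iff_append)
    with k(1) show False ..
  qed
  then have "run_factor (p # \<sigma>, i) x k = 0"
    by (simp add: run_factor_def step_weight_def st zero_block_def)
  then show ?thesis by (rule iprod_eq_zero)
qed

lemma run_factor_lift:
  assumes "fst s \<noteq> []" and "\<forall>k. fst (y k) \<noteq> []"
  shows "run_factor (lift \<sigma> s) (lift \<sigma> \<circ> y) = run_factor s y"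
proof
  fix k
  have "case_nat (lift \<sigma> s) (lift \<sigma> \<circ> y) k = lift \<sigma> (case_nat s y k)"
    by (cases k) simp_all
  moreover have "fst (case_nat s y k) \<noteq> []"
    using assms by (cases k) auto
  ultimately show "run_factor (lift \<sigma> s) (lift \<sigma> \<circ> y) k = run_factor s y k"
    by (simp add: run_factor_def step_weight_lift)
qed

lemma bij_betw_lift_runs:
  "bij_betw ((\<circ>) (lift \<sigma>)) {y. \<forall>k. fst (y k) \<noteq> []} (stays_above \<sigma>)"
proof (rule bij_betw_byWitness[where f' = "(\<circ>) (unlift \<sigma>)"])
  show "\<forall>x\<in>stays_above \<sigma>. lift \<sigma> \<circ> (unlift \<sigma> \<circ> x) = x"
    by (auto simp: fun_eq_iff stays_above_def strict_suffix_def lift_unlift)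
qed (auto simp: fun_eq_iff stays_above_def strict_suffix_lift strict_suffix_imp_unlift_nonempty)

lemma omega_weight_nonempty_stacks:
  "omega_weight s = V.isum (\<lambda>y. iprod (run_factor s y)) {y. \<forall>k. fst (y k) \<noteq> []}"
proof -
  have "omega_weight s = V.isum (\<lambda>y. iprod (run_factor s y)) (UNIV \<inter> {y. \<forall>k. fst (y k) \<noteq> []})"
    unfolding omega_weight_def
  proof (rule V.isum_restrict)
    fix y :: "nat \<Rightarrow> 'a list \<times> 'n"
    assume "y \<notin> {y. \<forall>k. fst (y k) \<noteq> []}"
    then obtain k where "fst (y k) = []" by auto
    then have "run_factor s y (Suc k) = 0"
      by (cases "y k") (simp add: run_factor_def step_weight_Nil)
    then show "iprod (run_factor s y) = 0" by (rule iprod_eq_zero)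
  qed
  then show ?thesis by simp
qed

lemma isum_stays_above:
  "V.isum (\<lambda>x. iprod (run_factor (p # \<sigma>, i) x)) (stays_above \<sigma>) = omega_weight ([p], i)"
proof -
  let ?F = "\<lambda>x. iprod (run_factor (p # \<sigma>, i) x)"
  let ?Nz = "{y :: nat \<Rightarrow> 'a list \<times> 'n. \<forall>k. fst (y k) \<noteq> []}"
  have "V.isum ?F (stays_above \<sigma>) = V.isum (?F \<circ> (\<circ>) (lift \<sigma>)) ?Nz"
    by (rule V.isum_reindex[OF bij_betw_lift_runs])
  also have "\<dots> = V.isum (\<lambda>y. iprod (run_factor ([p], i) y)) ?Nz"
    by (rule V.isum_cong) (use run_factor_lift[of "([p], i)" _ \<sigma>] in \<open>simp add: lift_def\<close>)
  also have "\<dots> = omega_weight ([p], i)"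
    by (rule omega_weight_nonempty_stacks[symmetric])
  finally show ?thesis .
qed

definition emptying_paths :: "nat \<Rightarrow> 'n \<Rightarrow> ('a list \<times> 'n) list set" where
  "emptying_paths t k =
    {ys. length ys = Suc t \<and> last ys = ([], k) \<and> (\<forall>u\<in>set (butlast ys). fst u \<noteq> [])}"

lemma emptying_paths_nth:
  assumes "ys \<in> emptying_paths t k" and "j < t"
  shows "fst (ys ! j) \<noteq> []"
proof -
  have "ys ! j = butlast ys ! j" using assms by (simp add: emptying_paths_def nth_butlast)
  moreover have "butlast ys ! j \<in> set (butlast ys)" using assms by (simp add: emptying_paths_def)
  ultimately show ?thesis using assms(1) by (auto simp: emptying_paths_def)
qed

lemma emptying_paths_last:
  assumes "ys \<in> emptying_paths t k"
  shows "ys ! t = ([], k)"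
proof -
  have "ys \<noteq> []" and "length ys = Suc t" using assms by (auto simp: emptying_paths_def)
  then have "last ys = ys ! t" by (simp add: last_conv_nth)
  then show ?thesis using assms by (simp add: emptying_paths_def)
qed

lemma mpow_eq_isum_emptying_paths:
  "mpow ssum (Suc t) M [p] [] i k = S.isum (path_weight ([p], i)) (emptying_paths t k)"
proof -
  let ?B = "{ys :: ('a list \<times> 'n) list. \<forall>u\<in>set (butlast ys). fst u \<noteq> []}"
  have "mpow ssum (Suc t) M [p] [] i k = S.isum (path_weight ([p], i)) (paths (Suc t) ([p], i) ([], k))"
    by (rule mpow_eq_isum_paths)
  also have "\<dots> = S.isum (path_weight ([p], i)) (paths (Suc t) ([p], i) ([], k) \<inter> ?B)"
    by (rule S.isum_restrict) (auto intro: path_weight_eq_zero)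
  also have "paths (Suc t) ([p], i) ([], k) \<inter> ?B = emptying_paths t k"
    by (auto simp: paths_def emptying_paths_def)
  finally show ?thesis .
qed

text \<open>A run that first returns to \<open>\<sigma>\<close> at step \<open>t\<close> is a path emptying the stack, lifted
  by \<open>\<sigma>\<close>, followed by an arbitrary run.\<close>

definition splice_run ::
    "'a list \<Rightarrow> nat \<Rightarrow> ('a list \<times> 'n) list \<times> (nat \<Rightarrow> 'a list \<times> 'n) \<Rightarrow> nat \<Rightarrow> 'a list \<times> 'n" where
  "splice_run \<sigma> t yz j = (if j < Suc t then lift \<sigma> (fst yz ! j) else snd yz (j - Suc t))"

definition split_run ::
    "'a list \<Rightarrow> nat \<Rightarrow> (nat \<Rightarrow> 'a list \<times> 'n) \<Rightarrow> ('a list \<times> 'n) list \<times> (nat \<Rightarrow> 'a list \<times> 'n)" where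
  "split_run \<sigma> t x = (map (unlift \<sigma> \<circ> x) [0..<Suc t], \<lambda>j. x (j + Suc t))"

lemma split_splice_run:
  "ys \<in> emptying_paths t k \<Longrightarrow> split_run \<sigma> t (splice_run \<sigma> t (ys, z)) = (ys, z)"
  by (auto simp: split_run_def splice_run_def emptying_paths_def fun_eq_iff
      simp del: upt_Suc intro!: nth_equalityI)

lemma splice_split_run:
  assumes "x \<in> first_return \<sigma> t k"
  shows "splice_run \<sigma> t (split_run \<sigma> t x) = x"
proof
  fix j
  have "suffix \<sigma> (fst (x j))" if "j < Suc t"
    using assms that by (cases "j = t") (auto simp: first_return_def strict_suffix_def)
  then show "splice_run \<sigma> t (split_run \<sigma> t x) j = x j"
    by (simp add: splice_run_def split_run_def lift_unlift del: upt_Suc)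
qed

lemma splice_run_in_first_return:
  assumes "ys \<in> emptying_paths t k"
  shows "splice_run \<sigma> t (ys, z) \<in> first_return \<sigma> t k"
proof -
  have "strict_suffix \<sigma> (fst (lift \<sigma> (ys ! j)))" if "j < t" for j
    using emptying_paths_nth[OF assms that] by (rule strict_suffix_lift)
  then show ?thesis
    using emptying_paths_last[OF assms] by (simp add: first_return_def splice_run_def lift_def)
qed

lemma split_run_in_emptying_paths:
  assumes "x \<in> first_return \<sigma> t k"
  shows "split_run \<sigma> t x \<in> emptying_paths t k \<times> UNIV"
proof -
  have "butlast (map (unlift \<sigma> \<circ> x) [0..<Suc t]) = map (unlift \<sigma> \<circ> x) [0..<t]"
    by (simp add: map_butlast[symmetric])
  then show ?thesis
    using assms strict_suffix_imp_unlift_nonempty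
    by (auto simp: emptying_paths_def split_run_def first_return_def unlift_def)
qed

lemma bij_betw_splice_run:
  "bij_betw (splice_run \<sigma> t) (emptying_paths t k \<times> UNIV) (first_return \<sigma> t k)"
proof (rule bij_betw_byWitness[where f' = "split_run \<sigma> t"])
  show "split_run \<sigma> t ` first_return \<sigma> t k \<subseteq> emptying_paths t k \<times> UNIV"
    using split_run_in_emptying_paths by blast
qed (auto simp: split_splice_run splice_split_run splice_run_in_first_return)

lemma iprod_splice_run:
  assumes ys: "ys \<in> emptying_paths t k"
  shows "iprod (run_factor (p # \<sigma>, i) (splice_run \<sigma> t (ys, z)))
    = smult (path_weight ([p], i) ys) (iprod (run_factor (\<sigma>, k) z))"
proof -
  let ?x = "splice_run \<sigma> t (ys, z)"
  have "iprod (run_factor (p # \<sigma>, i) ?x)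
      = smult (prod_list (map (run_factor (p # \<sigma>, i) ?x) [0..<Suc t]))
          (iprod (\<lambda>j. run_factor (p # \<sigma>, i) ?x (j + Suc t)))"
    by (rule iprod_split_prefix)
  also have "prod_list (map (run_factor (p # \<sigma>, i) ?x) [0..<Suc t])
      = path_weight (lift \<sigma> ([p], i)) (map ?x [0..<Suc t])"
    by (simp add: prod_list_run_factor lift_def del: upt_Suc)
  also have "map ?x [0..<Suc t] = map (lift \<sigma>) ys"
    using ys by (intro nth_equalityI) (auto simp: splice_run_def emptying_paths_def simp del: upt_Suc)
  also have "path_weight (lift \<sigma> ([p], i)) (map (lift \<sigma>) ys) = path_weight ([p], i) ys"
    using ys by (intro path_weight_lift) (auto simp: emptying_paths_def)
  also have "(\<lambda>j. run_factor (p # \<sigma>, i) ?x (j + Suc t)) = run_factor (\<sigma>, k) z"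
  proof
    fix j
    have "case_nat (p # \<sigma>, i) ?x (j + Suc t) = case_nat (\<sigma>, k) z j"
      using emptying_paths_last[OF ys] by (cases j) (auto simp: splice_run_def lift_def)
    then show "run_factor (p # \<sigma>, i) ?x (j + Suc t) = run_factor (\<sigma>, k) z j"
      by (simp add: run_factor_def splice_run_def)
  qed
  finally show ?thesis .
qed

lemma isum_first_return:
  "V.isum (\<lambda>x. iprod (run_factor (p # \<sigma>, i) x)) (first_return \<sigma> t k)
    = smult (mpow ssum (Suc t) M [p] [] i k) (omega_weight (\<sigma>, k))"
proof -
  let ?F = "\<lambda>x. iprod (run_factor (p # \<sigma>, i) x)"
  have "V.isum ?F (first_return \<sigma> t k) = V.isum (?F \<circ> splice_run \<sigma> t) (emptying_paths t k \<times> UNIV)"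
    by (rule V.isum_reindex[OF bij_betw_splice_run])
  also have "\<dots> = V.isum (\<lambda>ys. V.isum (\<lambda>z. smult (path_weight ([p], i) ys)
      (iprod (run_factor (\<sigma>, k) z))) UNIV) (emptying_paths t k)"
    by (simp add: V.isum_Sigma iprod_splice_run cong: V.isum_cong)
  also have "\<dots> = smult (S.isum (path_weight ([p], i)) (emptying_paths t k)) (omega_weight (\<sigma>, k))"
    by (simp add: isum_smult_right isum_smult_left omega_weight_def)
  finally show ?thesis by (simp only: mpow_eq_isum_emptying_paths)
qed

lemma mstar_eq_isum_mpow_Suc:
  "mstar ssum M [p] [] i k = S.isum (\<lambda>t. mpow ssum (Suc t) M [p] [] i k) UNIV"
proof -
  have "(UNIV :: nat set) = insert 0 (range Suc)" by (auto intro: nat.exhaust)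
  then have "mstar ssum M [p] [] i k = S.isum (\<lambda>m. mpow ssum m M [p] [] i k) (insert 0 (range Suc))"
    by (simp add: mstar_def S.csum_eq_isum)
  also have "\<dots> = S.isum (\<lambda>m. mpow ssum m M [p] [] i k) (range Suc)"
    by (simp add: S.isum_insert zero_block_def)
  also have "\<dots> = S.isum (\<lambda>t. mpow ssum (Suc t) M [p] [] i k) UNIV"
    by (subst S.isum_reindex[of Suc UNIV]) (auto simp: bij_betw_def comp_def)
  finally show ?thesis .
qed

lemma isum_returns:
  "V.isum (\<lambda>x. iprod (run_factor (p # \<sigma>, i) x)) (\<Union>(t, k). first_return \<sigma> t k)
    = (\<Sum>k\<in>UNIV. smult (mstar ssum M [p] [] i k) (omega_weight (\<sigma>, k)))"
proof -
  let ?F = "\<lambda>x. iprod (run_factor (p # \<sigma>, i) x)"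
  let ?G = "\<lambda>k t. smult (mpow ssum (Suc t) M [p] [] i k) (omega_weight (\<sigma>, k))"
  have "V.isum ?F (\<Union>(t, k). first_return \<sigma> t k)
      = V.isum (\<lambda>tk. V.isum ?F ((\<lambda>(t, k). first_return \<sigma> t k) tk)) UNIV"
    by (rule V.isum_UN_disjoint) (simp add: split_beta first_return_disjoint)
  also have "\<dots> = V.isum (\<lambda>(t, k). ?G k t) UNIV"
    by (rule V.isum_cong) (auto simp: isum_first_return)
  also have "\<dots> = V.isum (\<lambda>(k, t). ?G k t) UNIV"
  proof -
    have "bij_betw prod.swap (UNIV :: ('n \<times> nat) set) UNIV"
      by (rule bij_betw_byWitness[where f' = prod.swap]) auto
    then show ?thesis
      by (subst V.isum_reindex, assumption) (rule V.isum_cong, auto simp del: mpow.simps)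
  qed
  also have "\<dots> = V.isum (\<lambda>k. V.isum (?G k) UNIV) UNIV"
    using V.isum_Sigma[of "\<lambda>(k, t). ?G k t" UNIV "\<lambda>_. UNIV"] by simp
  also have "\<dots> = (\<Sum>k\<in>UNIV. smult (mstar ssum M [p] [] i k) (omega_weight (\<sigma>, k)))"
    by (simp add: isum_smult_left mstar_eq_isum_mpow_Suc V.isum_finite del: mpow.simps)
  finally show ?thesis .
qed

lemma omega_weight_Cons:
  "omega_weight (p # \<sigma>, i)
    = omega_weight ([p], i) + (\<Sum>k\<in>UNIV. smult (mstar ssum M [p] [] i k) (omega_weight (\<sigma>, k)))"
proof -
  let ?F = "\<lambda>x. iprod (run_factor (p # \<sigma>, i) x)"
  let ?N = "stays_above \<sigma>"
  let ?P = "\<Union>(t, k). first_return \<sigma> t k"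
  have "?N \<inter> ?P = {}" using stays_above_first_return_disjoint by blast
  then have "V.isum ?F ((?N \<union> ?P) \<union> (UNIV - (?N \<union> ?P)))
      = V.isum ?F ?N + V.isum ?F ?P + V.isum ?F (UNIV - (?N \<union> ?P))"
    by (simp only: V.isum_Un_disjoint Diff_disjoint)
  then have "omega_weight (p # \<sigma>, i) = V.isum ?F ?N + V.isum ?F ?P + V.isum ?F (UNIV - (?N \<union> ?P))"
    by (simp add: omega_weight_def Un_Diff_cancel)
  moreover have "V.isum ?F (UNIV - (?N \<union> ?P)) = 0"
    by (rule V.isum_zero, rule iprod_run_factor_eq_zero_if_no_return) auto
  ultimately show ?thesis by (simp only: isum_stays_above isum_returns add_0_right)
qed

definition pop_block :: "'a list \<Rightarrow> nat \<Rightarrow> ('n, 's) block" where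
  "pop_block \<pi> j = block_prod (map (\<lambda>q. mstar ssum M [q] []) (take j \<pi>))"

lemma omega_weight_stack:
  "omega_weight (\<pi>, i)
    = (\<Sum>j<length \<pi>. \<Sum>i'\<in>UNIV. smult (pop_block \<pi> j i i') (omega_weight ([\<pi> ! j], i')))"
proof (induction \<pi> arbitrary: i)
  case Nil
  then show ?case by (simp add: omega_weight_Nil)
next
  case (Cons p \<sigma>)
  let ?T = "\<lambda>\<pi> j i. \<Sum>i'\<in>UNIV. smult (pop_block \<pi> j i i') (omega_weight ([\<pi> ! j], i'))"
  have "(\<Sum>j<length (p # \<sigma>). ?T (p # \<sigma>) j i) = ?T (p # \<sigma>) 0 i + (\<Sum>j<length \<sigma>. ?T (p # \<sigma>) (Suc j) i)"
    by (simp add: sum.lessThan_Suc_shift del: sum.lessThan_Suc)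
  also have "?T (p # \<sigma>) 0 i = omega_weight ([p], i)"
    by (simp add: pop_block_def sum_smult_one_block)
  also have "(\<Sum>j<length \<sigma>. ?T (p # \<sigma>) (Suc j) i)
      = (\<Sum>j<length \<sigma>. \<Sum>k\<in>UNIV. smult (mstar ssum M [p] [] i k) (?T \<sigma> j k))"
    by (simp add: pop_block_def sum_smult_block_mult)
  also have "\<dots> = (\<Sum>k\<in>UNIV. smult (mstar ssum M [p] [] i k) (omega_weight (\<sigma>, k)))"
    by (subst sum.swap) (simp add: Cons.IH smult_sum_right)
  finally show ?case by (subst omega_weight_Cons[of p \<sigma> i]) (rule sym)
qed

lemma omega_weight_singleton_row:
  "omega_weight ([p], i)
    = (\<Sum>\<rho>\<in>{\<pi>. M [p] \<pi> \<noteq> zero_block}. \<Sum>k\<in>UNIV. smult (M [p] \<rho> i k) (omega_weight (\<rho>, k)))"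
proof -
  let ?F = "{\<pi>. M [p] \<pi> \<noteq> zero_block}"
  have "omega_weight ([p], i) = V.isum (\<lambda>t. smult (step_weight ([p], i) t) (omega_weight t)) UNIV"
    by (rule omega_weight_first_step)
  also have "\<dots> = (\<Sum>t\<in>UNIV \<inter> (?F \<times> UNIV). smult (step_weight ([p], i) t) (omega_weight t))"
  proof (rule V.isum_finite_support)
    show "finite (?F \<times> (UNIV :: 'n set))" using finite_M_row_support by simp
  qed (auto simp: step_weight_def zero_block_def smult_zero_left)
  finally show ?thesis
    by (simp add: sum.cartesian_product step_weight_def case_prod_beta)
qed

lemma omega_weight_singleton_expansion:
  "omega_weight ([p], i)
    = (\<Sum>(\<pi>, j)\<in>(SIGMA \<pi>:{\<pi>. M [p] \<pi> \<noteq> zero_block}. {..<length \<pi>}).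
        \<Sum>i'\<in>UNIV. smult (block_mult (M [p] \<pi>) (pop_block \<pi> j) i i') (omega_weight ([\<pi> ! j], i')))"
proof -
  have row: "(\<Sum>k\<in>UNIV. smult (M [p] \<rho> i k) (omega_weight (\<rho>, k)))
      = (\<Sum>j<length \<rho>. \<Sum>i'\<in>UNIV.
          smult (block_mult (M [p] \<rho>) (pop_block \<rho> j) i i') (omega_weight ([\<rho> ! j], i')))" for \<rho>
  proof -
    have "(\<Sum>k\<in>UNIV. smult (M [p] \<rho> i k) (omega_weight (\<rho>, k)))
        = (\<Sum>k\<in>UNIV. \<Sum>j<length \<rho>. smult (M [p] \<rho> i k)
            (\<Sum>i'\<in>UNIV. smult (pop_block \<rho> j k i') (omega_weight ([\<rho> ! j], i'))))"
      by (simp only: omega_weight_stack[of \<rho>] smult_sum_right)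
    also have "\<dots> = (\<Sum>j<length \<rho>. \<Sum>k\<in>UNIV. smult (M [p] \<rho> i k)
            (\<Sum>i'\<in>UNIV. smult (pop_block \<rho> j k i') (omega_weight ([\<rho> ! j], i'))))"
      by (rule sum.swap)
    finally show ?thesis by (simp only: sum_smult_block_mult)
  qed
  have "omega_weight ([p], i) = (\<Sum>\<rho>\<in>{\<pi>. M [p] \<pi> \<noteq> zero_block}. \<Sum>j<length \<rho>. \<Sum>i'\<in>UNIV.
      smult (block_mult (M [p] \<rho>) (pop_block \<rho> j) i i') (omega_weight ([\<rho> ! j], i')))"
    by (simp only: omega_weight_singleton_row row)
  also have "\<dots> = (\<Sum>(\<pi>, j)\<in>(SIGMA \<pi>:{\<pi>. M [p] \<pi> \<noteq> zero_block}. {..<length \<pi>}).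
      \<Sum>i'\<in>UNIV. smult (block_mult (M [p] \<pi>) (pop_block \<pi> j) i i') (omega_weight ([\<pi> ! j], i')))"
    by (rule sum.Sigma) (simp_all add: finite_M_row_support)
  finally show ?thesis .
qed

lemma A_M_eq_sum:
  "A_M ssum M p p' i i'
    = (\<Sum>(\<pi>, j)\<in>(SIGMA \<pi>:{\<pi>. M [p] \<pi> \<noteq> zero_block}. {..<length \<pi>}).
        if \<pi> ! j = p' then block_mult (M [p] \<pi>) (pop_block \<pi> j) i i' else 0)"
proof -
  let ?G = "SIGMA \<pi>:{\<pi>. M [p] \<pi> \<noteq> zero_block}. {..<length \<pi>}"
  let ?T = "{(\<pi>, j). \<pi> \<noteq> [] \<and> j < length \<pi> \<and> \<pi> ! j = p'}"
  let ?f = "\<lambda>(\<pi>, j). block_mult (M [p] \<pi>) (pop_block \<pi> j) i i'"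
  have fin: "finite ?G" using finite_M_row_support by simp
  have "A_M ssum M p p' i i' = S.isum ?f ?T"
    by (simp add: A_M_def S.csum_eq_isum pop_block_def)
  also have "\<dots> = sum ?f (?T \<inter> ?G)"
    by (rule S.isum_finite_support[OF fin]) (auto simp: block_mult_def zero_block_def)
  also have "?T \<inter> ?G = {x\<in>?G. fst x ! snd x = p'}" by auto
  finally show ?thesis
    by (simp add: sum.inter_filter[OF fin] case_prod_beta)
qed

text \<open>Finiteness of \<open>\<Gamma>\<close> is only needed to collapse the sum over \<open>p'\<close>.\<close>

lemma omega_weight_singleton_equation:
  assumes "finite (UNIV :: 'a set)"
  shows "omega_weight ([p], i)
    = (\<Sum>p'\<in>UNIV. \<Sum>i'\<in>UNIV. smult (A_M ssum M p p' i i') (omega_weight ([p'], i')))"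
proof -
  let ?G = "SIGMA \<pi>:{\<pi>. M [p] \<pi> \<noteq> zero_block}. {..<length \<pi>}"
  let ?Q = "\<lambda>(\<pi>, j) i'. smult (block_mult (M [p] \<pi>) (pop_block \<pi> j) i i') (omega_weight ([\<pi> ! j], i'))"
  have "smult (A_M ssum M p p' i i') (omega_weight ([p'], i'))
      = (\<Sum>x\<in>?G. if fst x ! snd x = p' then ?Q x i' else 0)" for p' i'
    unfolding A_M_eq_sum smult_sum_left by (intro sum.cong refl) (auto simp: smult_zero_left)
  then have "(\<Sum>p'\<in>UNIV. \<Sum>i'\<in>UNIV. smult (A_M ssum M p p' i i') (omega_weight ([p'], i')))
      = (\<Sum>p'\<in>UNIV. \<Sum>i'\<in>UNIV. \<Sum>x\<in>?G. if fst x ! snd x = p' then ?Q x i' else 0)"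
    by simp
  also have "\<dots> = (\<Sum>i'\<in>UNIV. \<Sum>p'\<in>UNIV. \<Sum>x\<in>?G. if fst x ! snd x = p' then ?Q x i' else 0)"
    by (rule sum.swap)
  also have "\<dots> = (\<Sum>i'\<in>UNIV. \<Sum>x\<in>?G. \<Sum>p'\<in>UNIV. if fst x ! snd x = p' then ?Q x i' else 0)"
    by (rule sum.cong[OF refl], rule sum.swap)
  also have "\<dots> = (\<Sum>x\<in>?G. \<Sum>i'\<in>UNIV. \<Sum>p'\<in>UNIV. if fst x ! snd x = p' then ?Q x i' else 0)"
    by (rule sum.swap)
  also have "\<dots> = (\<Sum>(\<pi>, j)\<in>?G. \<Sum>i'\<in>UNIV.
      smult (block_mult (M [p] \<pi>) (pop_block \<pi> j) i i') (omega_weight ([\<pi> ! j], i')))"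
    using assms by (simp add: case_prod_beta)
  also have "\<dots> = omega_weight ([p], i)"
    by (rule omega_weight_singleton_expansion[symmetric])
  finally show ?thesis ..
qed

end

theorem theorem4:
  fixes ssum :: "(idx \<Rightarrow> 's::semiring_1) \<Rightarrow> idx set \<Rightarrow> 's"
    and vsum :: "(idx \<Rightarrow> 'v::comm_monoid_add) \<Rightarrow> idx set \<Rightarrow> 'v"
    and smult :: "'s \<Rightarrow> 'v \<Rightarrow> 'v"
    and iprod :: "(nat \<Rightarrow> 's) \<Rightarrow> 'v"
    and M :: "'a::finite list \<Rightarrow> 'a list \<Rightarrow> ('n::finite, 's) block"
  assumes "cssp ssum vsum smult iprod"
    and "pushdown_transition_matrix M"
  shows "\<forall>p i. Momega vsum iprod M [p] i =
           (\<Sum>p'\<in>UNIV. \<Sum>j\<in>UNIV. smult (A_M ssum M p p' i j) (Momega vsum iprod M [p'] j))"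
proof -
  interpret pushdown ssum vsum smult iprod M
    using assms by (simp add: pushdown_def pushdown_axioms_def)
  show ?thesis
    unfolding Momega_eq_omega_weight using omega_weight_singleton_equation[OF finite_UNIV] by blast
qed

end
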